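(* Let $m \in \mathbb N$ and let $\phi \colon \mathcal H_2^0 \to \mathcal H_m$ be a map. Then the following are equivalent: (i) $\phi$ is linear and $\phi(\mathcal{IH}_2^0) \subset \mathcal H_m \cap \mathcal U_m$; (ii) there exist $p, q \in \mathbb N \cup \{0\}$ and $U \in \mathcal U_m$ such that $m = 2(p+q)$ and $\phi(A) = U\left((A \otimes I_p) \oplus (-A \otimes I_q)\right)U^\ast$ for all $A \in \mathcal H_2^0$.
   Context: $\mathcal H_m$ is the real vector space of $m\times m$ complex hermitian matrices, $\mathcal U_m$ the set of $m \times m$ unitary matrices, $\mathcal H_2^0$ the trace-zero matrices in $\mathcal H_2$, $\mathcal{IH}_2^0 = \mathcal H_2^0 \cap \mathcal U_2$, $\otimes$ the Kronecker product and $\oplus$ the block-diagonal direct sum (with $0\times0$ blocks omitted). *)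

theory Defs
  imports "Jordan_Normal_Form.Matrix"
begin

definition adj :: "complex mat \<Rightarrow> complex mat" where
  "adj A = mat (dim_col A) (dim_row A) (\<lambda>(i,j). cnj (A $$ (j,i)))"

definition mtrace :: "complex mat \<Rightarrow> complex" where
  "mtrace A = (\<Sum>i<dim_row A. A $$ (i,i))"

definition herm :: "nat \<Rightarrow> complex mat set" where
  "herm m = {A. A \<in> carrier_mat m m \<and> adj A = A}"

definition unitary :: "nat \<Rightarrow> complex mat set" where
  "unitary m = {U. U \<in> carrier_mat m m \<and> adj U * U = 1\<^sub>m m \<and> U * adj U = 1\<^sub>m m}"

definition herm20 :: "complex mat set" where
  "herm20 = {A \<in> herm 2. mtrace A = 0}"

definition iherm20 :: "complex mat set" where
  "iherm20 = herm20 \<inter> unitary 2"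

definition kron :: "complex mat \<Rightarrow> complex mat \<Rightarrow> complex mat" where
  "kron A B = mat (dim_row A * dim_row B) (dim_col A * dim_col B)
     (\<lambda>(i,j). A $$ (i div dim_row B, j div dim_col B) * B $$ (i mod dim_row B, j mod dim_col B))"

(* block-diagonal direct sum; 0x0 blocks contribute nothing *)
definition dsum :: "complex mat \<Rightarrow> complex mat \<Rightarrow> complex mat" where
  "dsum A B = four_block_mat A (0\<^sub>m (dim_row A) (dim_col B)) (0\<^sub>m (dim_row B) (dim_col A)) B"

definition real_linear_on :: "complex mat set \<Rightarrow> (complex mat \<Rightarrow> complex mat) \<Rightarrow> bool" where
  "real_linear_on S \<phi> \<longleftrightarrow>
     (\<forall>A\<in>S. \<forall>B\<in>S. \<forall>a b::real.
        \<phi> (complex_of_real a \<cdot>\<^sub>m A + complex_of_real b \<cdot>\<^sub>m B)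
          = complex_of_real a \<cdot>\<^sub>m \<phi> A + complex_of_real b \<cdot>\<^sub>m \<phi> B)"

end

theory Submission
  imports Defs
begin

text \<open>(ii) \<open>\<Longrightarrow>\<close> (i) is a direct computation: \<open>D(A) = (A \<otimes> I\<^sub>p) \<oplus> (-A \<otimes> I\<^sub>q)\<close> is real
  linear in \<open>A\<close> and squares to the identity whenever \<open>A\<close> does.

  For (i) \<open>\<Longrightarrow>\<close> (ii) write \<open>A \<in> H\<^sub>2\<^sup>0\<close> as \<open>x \<sigma>\<^sub>1 + y \<sigma>\<^sub>2 + z \<sigma>\<^sub>3\<close>; then
  \<open>A\<^sup>2 = (x\<^sup>2 + y\<^sup>2 + z\<^sup>2) I\<close>, so \<open>A\<close> is unitary iff \<open>(x,y,z)\<close> is a unit vector. Hence the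
  images \<open>S\<^sub>i = \<phi>(\<sigma>\<^sub>i)\<close> are hermitian involutions, and since also
  \<open>(3/5 S\<^sub>i + 4/5 S\<^sub>j)\<^sup>2 = I\<close>, they anticommute pairwise. The hermitian idempotents
  \<open>E\<^sub>\<plusminus> = 1/4 (I \<plusminus> S\<^sub>3)(I - \<i> S\<^sub>1 S\<^sub>2)\<close> factor as \<open>V\<^sub>\<plusminus> V\<^sub>\<plusminus>\<^sup>*\<close> with isometries
  \<open>V\<^sub>\<plusminus>\<close> of ranks \<open>p\<close> and \<open>q\<close>, and the block matrix \<open>U = [V\<^sub>+, S\<^sub>1 V\<^sub>+, V\<^sub>-, -S\<^sub>1 V\<^sub>-]\<close>
  is unitary with \<open>\<phi>(A) U = U D(A)\<close>.\<close>

text \<open>Ring laws whose side conditions are equations between dimensions rather than carrier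
  memberships, so that the simplifier can discharge them.\<close>

lemma mult_assoc_dims:
  "dim_col (A::complex mat) = dim_row B \<Longrightarrow> dim_col B = dim_row C \<Longrightarrow> A * B * C = A * (B * C)"
  by (rule assoc_mult_mat[of A "dim_row A" "dim_col A" B "dim_col B" C "dim_col C"]) auto

lemma add_mult_distrib_dims: "dim_row (A::complex mat) = dim_row B \<Longrightarrow> dim_col A = dim_col B \<Longrightarrow>
  dim_col A = dim_row C \<Longrightarrow> (A + B) * C = A * C + B * C"
  by (rule add_mult_distrib_mat[of A "dim_row A" "dim_col A" B C "dim_col C"]) auto

lemma mult_add_distrib_dims: "dim_row (B::complex mat) = dim_row C \<Longrightarrow> dim_col B = dim_col C \<Longrightarrow>
  dim_col A = dim_row B \<Longrightarrow> A * (B + C) = A * B + A * C"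
  by (rule mult_add_distrib_mat[of A "dim_row A" "dim_col A" B "dim_col B" C]) auto

lemma minus_mult_distrib_dims: "dim_row (A::complex mat) = dim_row B \<Longrightarrow> dim_col A = dim_col B \<Longrightarrow>
  dim_col A = dim_row C \<Longrightarrow> (A - B) * C = A * C - B * C"
  by (rule minus_mult_distrib_mat[of A "dim_row A" "dim_col A" B C "dim_col C"]) auto

lemma mult_minus_distrib_dims: "dim_row (B::complex mat) = dim_row C \<Longrightarrow> dim_col B = dim_col C \<Longrightarrow>
  dim_col A = dim_row B \<Longrightarrow> A * (B - C) = A * B - A * C"
  by (rule mult_minus_distrib_mat[of A "dim_row A" "dim_col A" B "dim_col B" C]) auto

lemma smult_mult_dims: "dim_col (A::complex mat) = dim_row B \<Longrightarrow> (c \<cdot>\<^sub>m A) * B = c \<cdot>\<^sub>m (A * B)"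
  by (rule mult_smult_assoc_mat[of A "dim_row A" "dim_col A" B "dim_col B"]) auto

lemma mult_smult_dims: "dim_col (A::complex mat) = dim_row B \<Longrightarrow> A * (c \<cdot>\<^sub>m B) = c \<cdot>\<^sub>m (A * B)"
  by (rule mult_smult_distrib[of A "dim_row A" "dim_col A" B "dim_col B"]) auto

lemmas mat_ring_dims = mult_assoc_dims add_mult_distrib_dims mult_add_distrib_dims
  minus_mult_distrib_dims mult_minus_distrib_dims smult_mult_dims mult_smult_dims

lemma smult_smult_mat: "(a::'a::semigroup_mult) \<cdot>\<^sub>m (b \<cdot>\<^sub>m A) = (a * b) \<cdot>\<^sub>m A"
  by (rule eq_matI) (auto simp: mult.assoc)

lemma one_smult_mat[simp]: "(1::complex) \<cdot>\<^sub>m A = A"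
  by (rule eq_matI) simp_all

lemma uminus_zero_mat[simp]: "- (0\<^sub>m n k) = (0\<^sub>m n k :: complex mat)"
  by (rule eq_matI) simp_all

lemma index_mult_mat_sum: "A \<in> carrier_mat n k \<Longrightarrow> B \<in> carrier_mat k l \<Longrightarrow> i < n \<Longrightarrow> j < l \<Longrightarrow>
  (A * B) $$ (i,j) = (\<Sum>t<k. A $$ (i,t) * B $$ (t,j))"
  by (simp add: scalar_prod_def atLeast0LessThan)

lemma adj_dims[simp]: "dim_row (adj A) = dim_col A" "dim_col (adj A) = dim_row A"
  by (auto simp: adj_def)

lemma index_adj[simp]: "i < dim_col A \<Longrightarrow> j < dim_row A \<Longrightarrow> adj A $$ (i,j) = cnj (A $$ (j,i))"
  by (auto simp: adj_def)

lemma adj_carrier[simp]: "A \<in> carrier_mat n k \<Longrightarrow> adj A \<in> carrier_mat k n"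
  using carrier_matD[of A n k] by (intro carrier_matI) simp_all

lemma adj_adj[simp]: "adj (adj A) = A"
  by (rule eq_matI) simp_all

lemma adj_mult:
  assumes "dim_col (A::complex mat) = dim_row B"
  shows "adj (A * B) = adj B * adj A"
proof (rule eq_matI)
  fix i j assume "i < dim_row (adj B * adj A)" "j < dim_col (adj B * adj A)"
  then show "adj (A * B) $$ (i,j) = (adj B * adj A) $$ (i,j)"
    using assms by (simp add: scalar_prod_def cnj_sum mult.commute)
qed simp_all

lemma adj_add: "dim_row A = dim_row B \<Longrightarrow> dim_col A = dim_col B \<Longrightarrow> adj (A + B) = adj A + adj B"
  by (rule eq_matI) simp_all

lemma adj_minus: "dim_row A = dim_row B \<Longrightarrow> dim_col A = dim_col B \<Longrightarrow> adj (A - B) = adj A - adj B"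
  by (rule eq_matI) simp_all

lemma adj_smult[simp]: "adj (c \<cdot>\<^sub>m A) = cnj c \<cdot>\<^sub>m adj A"
  by (rule eq_matI) simp_all

lemma adj_uminus[simp]: "adj (- A) = - adj A"
  by (rule eq_matI) simp_all

lemma adj_one[simp]: "adj (1\<^sub>m n) = 1\<^sub>m n"
  by (rule eq_matI) simp_all

lemma adj_zero[simp]: "adj (0\<^sub>m n k) = 0\<^sub>m k n"
  by (rule eq_matI) simp_all

lemma mtrace_one[simp]: "mtrace (1\<^sub>m n) = of_nat n"
  by (simp add: mtrace_def)

lemma mtrace_minus: "A \<in> carrier_mat n n \<Longrightarrow> B \<in> carrier_mat n n \<Longrightarrow> mtrace (A - B) = mtrace A - mtrace B"
  by (simp add: mtrace_def sum_subtractf)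

lemma mtrace_mult:
  assumes "A \<in> carrier_mat n k" "B \<in> carrier_mat k n"
  shows "mtrace (A * B) = (\<Sum>i<n. \<Sum>j<k. A $$ (i,j) * B $$ (j,i))"
proof -
  have "mtrace (A * B) = (\<Sum>i<n. (A * B) $$ (i,i))"
    using assms by (simp add: mtrace_def)
  also have "\<dots> = (\<Sum>i<n. \<Sum>j<k. A $$ (i,j) * B $$ (j,i))"
    using assms by (intro sum.cong) (simp_all add: index_mult_mat_sum del: index_mult_mat)
  finally show ?thesis .
qed

lemma mtrace_mult_comm:
  assumes "A \<in> carrier_mat n k" "B \<in> carrier_mat k n"
  shows "mtrace (A * B) = mtrace (B * A)"
  unfolding mtrace_mult[OF assms] mtrace_mult[OF assms(2,1)]
  by (subst sum.swap) (simp add: mult.commute)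

lemma unitary_dim_eq:
  assumes U: "U \<in> carrier_mat m n" and "adj U * U = 1\<^sub>m n" "U * adj U = 1\<^sub>m m"
  shows "m = n"
proof -
  have "of_nat m = (of_nat n :: complex)"
    using mtrace_mult_comm[OF U adj_carrier[OF U]] assms by simp
  then show ?thesis
    by (simp only: of_nat_eq_iff)
qed

definition append_cols :: "complex mat \<Rightarrow> complex mat \<Rightarrow> complex mat" where
  "append_cols X Y = four_block_mat X Y (0\<^sub>m 0 (dim_col X)) (0\<^sub>m 0 (dim_col Y))"

lemma append_cols_carrier[simp]:
  "X \<in> carrier_mat m a \<Longrightarrow> Y \<in> carrier_mat m b \<Longrightarrow> append_cols X Y \<in> carrier_mat m (a + b)"
  by (auto simp: append_cols_def)

lemma four_block_mat_empty_rows_cols: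
  "A \<in> carrier_mat m k \<Longrightarrow> B \<in> carrier_mat m 0 \<Longrightarrow> C \<in> carrier_mat 0 k \<Longrightarrow> D \<in> carrier_mat 0 0
  \<Longrightarrow> four_block_mat A B C D = A"
  by (rule eq_matI) simp_all

lemma empty_rows_mat_eq_zero: "A \<in> carrier_mat 0 n \<Longrightarrow> A = 0\<^sub>m 0 n"
  by (rule eq_matI) simp_all

lemma mult_append_cols:
  assumes "M \<in> carrier_mat n m" "X \<in> carrier_mat m a" "Y \<in> carrier_mat m b"
  shows "M * append_cols X Y = append_cols (M * X) (M * Y)"
proof -
  have "M * append_cols X Y
      = four_block_mat M (0\<^sub>m n 0) (0\<^sub>m 0 m) (0\<^sub>m 0 0) * four_block_mat X Y (0\<^sub>m 0 a) (0\<^sub>m 0 b)"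
    using assms by (simp add: append_cols_def four_block_mat_empty_rows_cols)
  also have "\<dots> = four_block_mat (M * X + 0\<^sub>m n 0 * 0\<^sub>m 0 a) (M * Y + 0\<^sub>m n 0 * 0\<^sub>m 0 b)
       (0\<^sub>m 0 m * X + 0\<^sub>m 0 0 * 0\<^sub>m 0 a) (0\<^sub>m 0 m * Y + 0\<^sub>m 0 0 * 0\<^sub>m 0 b)"
    by (rule mult_four_block_mat) (use assms in auto)
  also have "\<dots> = append_cols (M * X) (M * Y)"
    using assms unfolding append_cols_def
    by (intro cong_four_block_mat) (auto intro!: empty_rows_mat_eq_zero)
  finally show ?thesis .
qed

lemma append_cols_mult_four_block_mat:
  assumes "X \<in> carrier_mat m a" "Y \<in> carrier_mat m b"
    "A \<in> carrier_mat a c" "B \<in> carrier_mat a d" "C \<in> carrier_mat b c" "D \<in> carrier_mat b d"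
  shows "append_cols X Y * four_block_mat A B C D = append_cols (X * A + Y * C) (X * B + Y * D)"
proof -
  have "append_cols X Y * four_block_mat A B C D
      = four_block_mat X Y (0\<^sub>m 0 a) (0\<^sub>m 0 b) * four_block_mat A B C D"
    using assms by (simp add: append_cols_def)
  also have "\<dots> = four_block_mat (X * A + Y * C) (X * B + Y * D)
          (0\<^sub>m 0 a * A + 0\<^sub>m 0 b * C) (0\<^sub>m 0 a * B + 0\<^sub>m 0 b * D)"
    by (rule mult_four_block_mat) (use assms in auto)
  also have "\<dots> = append_cols (X * A + Y * C) (X * B + Y * D)"
    using assms unfolding append_cols_def
    by (intro cong_four_block_mat) (auto intro!: empty_rows_mat_eq_zero)
  finally show ?thesis .
qed

lemma adj_append_cols:
  "X \<in> carrier_mat m a \<Longrightarrow> Y \<in> carrier_mat m b \<Longrightarrow>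
  adj (append_cols X Y) = four_block_mat (adj X) (0\<^sub>m a 0) (adj Y) (0\<^sub>m b 0)"
  by (rule eq_matI) (auto simp: append_cols_def)

lemma adj_append_cols_mult_append_cols:
  assumes "X \<in> carrier_mat m a" "Y \<in> carrier_mat m b" "Z \<in> carrier_mat m c" "W \<in> carrier_mat m d"
  shows "adj (append_cols X Y) * append_cols Z W
    = four_block_mat (adj X * Z) (adj X * W) (adj Y * Z) (adj Y * W)"
proof -
  have "adj (append_cols X Y) * append_cols Z W
      = four_block_mat (adj X) (0\<^sub>m a 0) (adj Y) (0\<^sub>m b 0) * four_block_mat Z W (0\<^sub>m 0 c) (0\<^sub>m 0 d)"
    using assms unfolding adj_append_cols[OF assms(1,2)] by (simp add: append_cols_def)
  also have "\<dots> = four_block_mat (adj X * Z + 0\<^sub>m a 0 * 0\<^sub>m 0 c) (adj X * W + 0\<^sub>m a 0 * 0\<^sub>m 0 d)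
          (adj Y * Z + 0\<^sub>m b 0 * 0\<^sub>m 0 c) (adj Y * W + 0\<^sub>m b 0 * 0\<^sub>m 0 d)"
    by (rule mult_four_block_mat) (use assms in auto)
  also have "\<dots> = four_block_mat (adj X * Z) (adj X * W) (adj Y * Z) (adj Y * W)"
    using assms by (intro cong_four_block_mat) auto
  finally show ?thesis .
qed

lemma append_cols_mult_adj_append_cols:
  assumes "X \<in> carrier_mat m a" "Y \<in> carrier_mat m b" "Z \<in> carrier_mat n a" "W \<in> carrier_mat n b"
  shows "append_cols X Y * adj (append_cols Z W) = X * adj Z + Y * adj W"
proof -
  have "append_cols X Y * adj (append_cols Z W)
      = four_block_mat X Y (0\<^sub>m 0 a) (0\<^sub>m 0 b) * four_block_mat (adj Z) (0\<^sub>m a 0) (adj W) (0\<^sub>m b 0)"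
    using assms unfolding adj_append_cols[OF assms(3,4)] by (simp add: append_cols_def)
  also have "\<dots> = four_block_mat (X * adj Z + Y * adj W) (X * 0\<^sub>m a 0 + Y * 0\<^sub>m b 0)
          (0\<^sub>m 0 a * adj Z + 0\<^sub>m 0 b * adj W) (0\<^sub>m 0 a * 0\<^sub>m a 0 + 0\<^sub>m 0 b * 0\<^sub>m b 0)"
    by (rule mult_four_block_mat) (use assms in auto)
  also have "\<dots> = X * adj Z + Y * adj W"
    using assms by (intro four_block_mat_empty_rows_cols) auto
  finally show ?thesis .
qed

lemma isometry_append_cols:
  assumes X: "X \<in> carrier_mat m a" and Y: "Y \<in> carrier_mat m b"
    and XX: "adj X * X = 1\<^sub>m a" and YY: "adj Y * Y = 1\<^sub>m b" and XY: "adj X * Y = 0\<^sub>m a b"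
  shows "adj (append_cols X Y) * append_cols X Y = 1\<^sub>m (a + b)"
proof -
  have "adj Y * X = adj (adj X * Y)"
    using X Y by (simp add: adj_mult)
  then have YX: "adj Y * X = 0\<^sub>m b a"
    using XY by simp
  show ?thesis
    unfolding adj_append_cols_mult_append_cols[OF X Y X Y] XX YY XY YX by (rule four_block_one_mat)
qed

section \<open>Orthogonal projections factor through isometries\<close>

definition orth_proj :: "nat \<Rightarrow> complex mat \<Rightarrow> bool" where
  "orth_proj m E \<longleftrightarrow> E \<in> carrier_mat m m \<and> adj E = E \<and> E * E = E"

lemma orth_proj_diag:
  assumes E: "orth_proj m E" and j: "j < m"
  shows "E $$ (j,j) = of_real (\<Sum>k<m. (cmod (E $$ (k,j)))\<^sup>2)"
proof -
  have Em: "E \<in> carrier_mat m m" and h: "adj E = E" and i: "E * E = E"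
    using E by (auto simp: orth_proj_def)
  have "E $$ (j,j) = (E * E) $$ (j,j)"
    using i by simp
  also have "\<dots> = (\<Sum>k<m. E $$ (j,k) * E $$ (k,j))"
    by (rule index_mult_mat_sum[OF Em Em j j])
  also have "\<dots> = (\<Sum>k<m. cnj (E $$ (k,j)) * E $$ (k,j))"
  proof (rule sum.cong[OF refl])
    fix k assume "k \<in> {..<m}"
    then have "E $$ (j,k) = cnj (E $$ (k,j))"
      using Em j arg_cong[OF h, of "\<lambda>M. M $$ (j,k)"] by simp
    then show "E $$ (j,k) * E $$ (k,j) = cnj (E $$ (k,j)) * E $$ (k,j)"
      by simp
  qed
  also have "\<dots> = (\<Sum>k<m. of_real ((cmod (E $$ (k,j)))\<^sup>2))"
    by (rule sum.cong[OF refl]) (use complex_norm_square in \<open>simp add: mult.commute\<close>)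
  also have "\<dots> = of_real (\<Sum>k<m. (cmod (E $$ (k,j)))\<^sup>2)"
    by simp
  finally show ?thesis .
qed

lemma orth_proj_eq_zero_if_trace_nonpos:
  assumes E: "orth_proj m E" and tr: "Re (mtrace E) \<le> 0"
  shows "E = 0\<^sub>m m m"
proof (rule eq_matI)
  fix k j assume k: "k < dim_row (0\<^sub>m m m)" and j: "j < dim_col (0\<^sub>m m m)"
  let ?col = "\<lambda>j. \<Sum>k<m. (cmod (E $$ (k,j)))\<^sup>2"
  have "E \<in> carrier_mat m m"
    using E by (simp add: orth_proj_def)
  then have "mtrace E = (\<Sum>j<m. of_real (?col j))"
    by (simp add: mtrace_def orth_proj_diag[OF E])
  then have "(\<Sum>j<m. ?col j) \<le> 0"
    using tr by simp
  moreover have "\<forall>j\<in>{..<m}. 0 \<le> ?col j"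
    by (auto intro: sum_nonneg)
  ultimately have "\<forall>j\<in>{..<m}. ?col j = 0"
    by (metis (no_types, lifting) finite_lessThan order_antisym sum_nonneg sum_nonneg_eq_0_iff)
  then have "\<forall>k\<in>{..<m}. (cmod (E $$ (k,j)))\<^sup>2 = 0"
    using j by (subst (asm) sum_nonneg_eq_0_iff) auto
  then show "E $$ (k,j) = 0\<^sub>m m m $$ (k,j)"
    using k j by simp
qed (use E in \<open>auto simp: orth_proj_def\<close>)

lemma orth_proj_fixes_unit_vector:
  assumes E: "orth_proj m E" and nz: "E \<noteq> 0\<^sub>m m m"
  obtains u where "u \<in> carrier_mat m 1" "adj u * u = 1\<^sub>m 1" "E * u = u"
proof -
  have Em: "E \<in> carrier_mat m m" and i: "E * E = E"
    using E by (auto simp: orth_proj_def)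
  obtain k j where kj: "k < m" "j < m" "E $$ (k,j) \<noteq> 0"
    using nz Em by (metis carrier_matD(1,2) eq_matI index_zero_mat(1,2,3))
  define s where "s = (\<Sum>k<m. (cmod (E $$ (k,j)))\<^sup>2)"
  have "0 < (cmod (E $$ (k,j)))\<^sup>2"
    using kj by simp
  also have "\<dots> \<le> s"
    unfolding s_def by (rule member_le_sum) (use kj in auto)
  finally have s: "0 < s" .
  define c where "c = complex_of_real (sqrt s)"
  have cnj_c: "cnj c * c = of_real s"
    using s by (simp add: c_def flip: of_real_mult)
  define u where "u = mat m 1 (\<lambda>(i,_). E $$ (i,j) / c)"
  have u: "u \<in> carrier_mat m 1"
    by (simp add: u_def)
  have "adj u * u = 1\<^sub>m 1"
  proof (rule eq_matI)
    fix a b assume "a < dim_row (1\<^sub>m 1)" "b < dim_col (1\<^sub>m 1)"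
    then have ab: "a = 0" "b = 0" by auto
    have "(adj u * u) $$ (0,0) = (\<Sum>t<m. adj u $$ (0,t) * u $$ (t,0))"
      by (rule index_mult_mat_sum[OF adj_carrier[OF u] u]) auto
    also have "\<dots> = (\<Sum>t<m. cnj (E $$ (t,j) / c) * (E $$ (t,j) / c))"
      using u by (simp add: u_def)
    also have "\<dots> = (\<Sum>t<m. of_real ((cmod (E $$ (t,j)))\<^sup>2)) / (cnj c * c)"
      by (simp add: sum_divide_distrib) (use complex_norm_square in \<open>simp add: mult.commute\<close>)
    also have "\<dots> = of_real s / of_real s"
      by (simp only: cnj_c s_def of_real_sum)
    also have "\<dots> = 1"
      using s by simp
    finally show "(adj u * u) $$ (a,b) = 1\<^sub>m 1 $$ (a,b)"
      using ab by simp
  qed (use u in auto)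
  moreover have "E * u = u"
  proof (rule eq_matI)
    fix a b assume "a < dim_row u" "b < dim_col u"
    then have ab: "a < m" "b = 0" using u by auto
    have "(E * u) $$ (a,b) = (\<Sum>t<m. E $$ (a,t) * u $$ (t,b))"
      by (rule index_mult_mat_sum[OF Em u]) (use ab in auto)
    also have "\<dots> = (\<Sum>t<m. E $$ (a,t) * E $$ (t,j)) / c"
      using ab by (simp add: u_def sum_divide_distrib)
    also have "\<dots> = (E * E) $$ (a,j) / c"
      using ab kj by (simp add: index_mult_mat_sum[OF Em Em] del: index_mult_mat)
    also have "\<dots> = u $$ (a,b)"
      using i ab by (simp add: u_def)
    finally show "(E * u) $$ (a,b) = u $$ (a,b)" .
  qed (use u Em in auto)
  ultimately show ?thesis
    using u that by blast
qed

lemma isometry_range: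
  assumes V: "V \<in> carrier_mat m p" and VV: "adj V * V = 1\<^sub>m p" and E: "V * adj V = E"
  shows "E * V = V" "adj V * E = adj V"
  using V VV by (simp_all flip: E add: mult_assoc_dims) (simp_all flip: mult_assoc_dims)

lemma isometry_adj_mult_eq_zero:
  assumes V: "V \<in> carrier_mat m p" "adj V * V = 1\<^sub>m p" "V * adj V = E"
    and W: "W \<in> carrier_mat m q" "adj W * W = 1\<^sub>m q" "W * adj W = F"
    and M: "M \<in> carrier_mat m m" and EMF: "E * (M * F) = 0\<^sub>m m m"
  shows "adj V * (M * W) = 0\<^sub>m p q"
proof -
  have "adj V * (M * W) = adj V * E * (M * (F * W))"
    by (simp add: isometry_range[OF V] isometry_range[OF W])
  also have "\<dots> = adj V * (E * (M * F)) * W"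
    unfolding V(3)[symmetric] W(3)[symmetric] using V(1) W(1) M
    by (simp add: mult_assoc_dims carrier_matD)
  also have "\<dots> = 0\<^sub>m p q"
    unfolding EMF using V(1) W(1) by simp
  finally show ?thesis .
qed

lemma orth_proj_remove_unit_vector:
  assumes E: "orth_proj m E" and u: "u \<in> carrier_mat m 1" and uu: "adj u * u = 1\<^sub>m 1"
    and Eu: "E * u = u"
  shows "orth_proj m (E - u * adj u)" "mtrace (E - u * adj u) = mtrace E - 1"
    "(E - u * adj u) * u = 0\<^sub>m m 1"
proof -
  have Em: "E \<in> carrier_mat m m" and h: "adj E = E" and i: "E * E = E"
    using E by (auto simp: orth_proj_def)
  define W where "W = u * adj u"
  have W: "W \<in> carrier_mat m m"
    using u by (simp add: W_def)
  have "adj u * E = adj (E * u)"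
    using Em u h by (simp add: adj_mult)
  then have uE: "adj u * E = adj u"
    using Eu by simp
  have EW: "E * W = W" and WE: "W * E = W" and WW: "W * W = W" and Wu: "W * u = u"
    unfolding W_def using Em u Eu uE uu
    by (simp_all flip: mult_assoc_dims) (simp_all add: mult_assoc_dims)
  have hW: "adj W = W"
    unfolding W_def using u by (simp add: adj_mult)
  have "(E - W) * (E - W) = E * E - W * E - (E * W - W * W)"
    using Em W by (simp add: minus_mult_distrib_dims mult_minus_distrib_dims)
  also have "\<dots> = E - W"
    unfolding i EW WE WW using Em W by (intro eq_matI) auto
  finally show "orth_proj m (E - u * adj u)"
    using Em W h hW by (simp add: orth_proj_def adj_minus minus_carrier_mat flip: W_def)
  have "mtrace W = 1"
    unfolding W_def using mtrace_mult_comm[OF u adj_carrier[OF u]] uu by simp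
  then show "mtrace (E - u * adj u) = mtrace E - 1"
    using mtrace_minus[OF Em W] by (simp add: W_def)
  show "(E - u * adj u) * u = 0\<^sub>m m 1"
    using Em W u Eu Wu by (simp add: minus_mult_distrib_dims flip: W_def)
qed

lemma isometry_append_unit_vector:
  assumes V: "V \<in> carrier_mat m p" "adj V * V = 1\<^sub>m p" "V * adj V = F"
    and u: "u \<in> carrier_mat m 1" "adj u * u = 1\<^sub>m 1" and Fu: "F * u = 0\<^sub>m m 1"
  shows "adj (append_cols V u) * append_cols V u = 1\<^sub>m (p + 1)"
    "append_cols V u * adj (append_cols V u) = F + u * adj u"
proof -
  have "adj V * u = adj V * F * u"
    using isometry_range(2)[OF V] by simp
  also have "\<dots> = adj V * (F * u)"
    unfolding V(3)[symmetric] using V(1) u(1) by (simp add: mult_assoc_dims)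
  finally have "adj V * u = 0\<^sub>m p 1"
    using Fu V(1) by simp
  then show "adj (append_cols V u) * append_cols V u = 1\<^sub>m (p + 1)"
    using V u by (intro isometry_append_cols) auto
  show "append_cols V u * adj (append_cols V u) = F + u * adj u"
    using V u by (simp add: append_cols_mult_adj_append_cols)
qed

lemma orth_proj_factor_isometry:
  assumes "orth_proj m E"
  shows "\<exists>p V. V \<in> carrier_mat m p \<and> adj V * V = 1\<^sub>m p \<and> V * adj V = E"
proof -
  have zero: "\<exists>p V. V \<in> carrier_mat m p \<and> adj V * V = 1\<^sub>m p \<and> V * adj V = 0\<^sub>m m m"
    by (intro exI[of _ 0] exI[of _ "0\<^sub>m m 0"]) (auto intro: eq_matI)
  have "\<exists>p V. V \<in> carrier_mat m p \<and> adj V * V = 1\<^sub>m p \<and> V * adj V = E"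
    if "orth_proj m E" "Re (mtrace E) \<le> real k" for k E
    using that
  proof (induction k arbitrary: E)
    case 0
    then show ?case
      using zero orth_proj_eq_zero_if_trace_nonpos by simp
  next
    case (Suc k)
    show ?case
    proof (cases "E = 0\<^sub>m m m")
      case True
      then show ?thesis using zero by simp
    next
      case False
      obtain u where u: "u \<in> carrier_mat m 1" "adj u * u = 1\<^sub>m 1" "E * u = u"
        using orth_proj_fixes_unit_vector[OF Suc.prems(1) False] .
      define E' where "E' = E - u * adj u"
      note E' = orth_proj_remove_unit_vector[OF Suc.prems(1) u, folded E'_def]
      obtain p V where V: "V \<in> carrier_mat m p" "adj V * V = 1\<^sub>m p" "V * adj V = E'"
        using Suc.IH[OF E'(1)] E'(2) Suc.prems(2) by auto
      have "adj (append_cols V u) * append_cols V u = 1\<^sub>m (p + 1)"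
        "append_cols V u * adj (append_cols V u) = E' + u * adj u"
        using isometry_append_unit_vector[OF V u(1,2) E'(3)] by simp_all
      moreover have "E' + u * adj u = E"
        unfolding E'_def using Suc.prems(1) u by (intro eq_matI) (auto simp: orth_proj_def)
      ultimately show ?thesis
        using V u by (meson append_cols_carrier)
    qed
  qed
  moreover have "Re (mtrace E) \<le> real (nat \<lceil>Re (mtrace E)\<rceil>)"
    by linarith
  ultimately show ?thesis
    using assms by blast
qed

section \<open>Pauli coordinates on trace-zero hermitian 2x2 matrices\<close>

lemma eq_mat2I:
  "A \<in> carrier_mat 2 2 \<Longrightarrow> B \<in> carrier_mat 2 2 \<Longrightarrow> A $$ (0,0) = B $$ (0,0) \<Longrightarrow>
  A $$ (0,1) = B $$ (0,1) \<Longrightarrow> A $$ (1,0) = B $$ (1,0) \<Longrightarrow> A $$ (1,1) = B $$ (1,1) \<Longrightarrow> A = B"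
  by (rule eq_matI) (auto simp: less_2_cases_iff)

lemma index_mult_mat2: "A \<in> carrier_mat 2 2 \<Longrightarrow> B \<in> carrier_mat 2 2 \<Longrightarrow> i < 2 \<Longrightarrow> j < 2 \<Longrightarrow>
  (A * B) $$ (i,j) = A $$ (i,0) * B $$ (0,j) + A $$ (i,1) * B $$ (1,j)"
  by (subst index_mult_mat_sum[of A 2 2 B 2]) (auto simp: numeral_2_eq_2)

lemma mtrace_mat2: "A \<in> carrier_mat 2 2 \<Longrightarrow> mtrace A = A $$ (0,0) + A $$ (1,1)"
  by (simp add: mtrace_def numeral_2_eq_2)

text \<open>\<open>pauli x y z\<close> is \<open>x \<sigma>\<^sub>1 + y \<sigma>\<^sub>2 + z \<sigma>\<^sub>3\<close> for the Pauli matrices \<open>\<sigma>\<^sub>i\<close>.\<close>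

definition pauli :: "real \<Rightarrow> real \<Rightarrow> real \<Rightarrow> complex mat" where
  "pauli x y z = mat 2 2 (\<lambda>(i,j).
     if i = 0 \<and> j = 0 then of_real z else if i = 0 then of_real x - \<i> * of_real y
     else if j = 0 then of_real x + \<i> * of_real y else - of_real z)"

lemma pauli_carrier[simp]: "pauli x y z \<in> carrier_mat 2 2"
  by (simp add: pauli_def)

lemma pauli_dims[simp]: "dim_row (pauli x y z) = 2" "dim_col (pauli x y z) = 2"
  by (simp_all add: pauli_def)

lemma index_pauli[simp]:
  "pauli x y z $$ (0,0) = of_real z"
  "pauli x y z $$ (0,1) = of_real x - \<i> * of_real y" "pauli x y z $$ (0,Suc 0) = of_real x - \<i> * of_real y"
  "pauli x y z $$ (1,0) = of_real x + \<i> * of_real y" "pauli x y z $$ (Suc 0,0) = of_real x + \<i> * of_real y"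
  "pauli x y z $$ (1,1) = - of_real z" "pauli x y z $$ (Suc 0,Suc 0) = - of_real z"
  by (simp_all add: pauli_def)

lemma pauli_in_herm20: "pauli x y z \<in> herm20"
proof -
  have "adj (pauli x y z) = pauli x y z"
    by (rule eq_mat2I) (auto simp: complex_eq_iff)
  moreover have "mtrace (pauli x y z) = 0"
    by (simp add: mtrace_mat2)
  ultimately show ?thesis
    by (simp add: herm20_def herm_def)
qed

lemma herm20_eq_pauli:
  assumes "A \<in> herm20"
  shows "A = pauli (Re (A $$ (1,0))) (Im (A $$ (1,0))) (Re (A $$ (0,0)))"
proof -
  from assms have A: "A \<in> carrier_mat 2 2" and h: "adj A = A" and tr: "mtrace A = 0"
    by (auto simp: herm20_def herm_def)
  have "cnj (A $$ (0,0)) = A $$ (0,0)"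
    using arg_cong[OF h, of "\<lambda>M. M $$ (0,0)"] A by simp
  then have "Im (A $$ (0,0)) = 0"
    by (simp add: complex_eq_iff)
  moreover have "cnj (A $$ (1,0)) = A $$ (0,1)"
    using arg_cong[OF h, of "\<lambda>M. M $$ (0,1)"] A by simp
  moreover have "A $$ (1,1) = - A $$ (0,0)"
    using tr A by (simp add: mtrace_mat2 add_eq_0_iff)
  ultimately show ?thesis
    by (intro eq_mat2I[OF A]) (auto simp: complex_eq_iff)
qed

lemma pauli_lin: "of_real a \<cdot>\<^sub>m pauli x y z + of_real b \<cdot>\<^sub>m pauli x' y' z'
  = pauli (a * x + b * x') (a * y + b * y') (a * z + b * z')"
  by (rule eq_mat2I) (auto simp: algebra_simps)

lemma herm20_lin_closed: "A \<in> herm20 \<Longrightarrow> B \<in> herm20 \<Longrightarrow> of_real a \<cdot>\<^sub>m A + of_real b \<cdot>\<^sub>m B \<in> herm20"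
  by (metis herm20_eq_pauli pauli_in_herm20 pauli_lin)

lemma pauli_square: "pauli x y z * pauli x y z = of_real (x\<^sup>2 + y\<^sup>2 + z\<^sup>2) \<cdot>\<^sub>m 1\<^sub>m 2"
  by (rule eq_mat2I[OF mult_carrier_mat[OF pauli_carrier pauli_carrier]])
    (simp_all add: index_mult_mat2 complex_eq_iff power2_eq_square algebra_simps del: index_mult_mat)

lemma pauli_in_iherm20:
  assumes "x\<^sup>2 + y\<^sup>2 + z\<^sup>2 = 1"
  shows "pauli x y z \<in> iherm20"
proof -
  have "adj (pauli x y z) = pauli x y z"
    using pauli_in_herm20 by (simp add: herm20_def herm_def)
  moreover have "pauli x y z * pauli x y z = 1\<^sub>m 2"
    using assms pauli_square[of x y z] by simp
  ultimately show ?thesis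
    using pauli_in_herm20 by (simp add: iherm20_def unitary_def)
qed

section \<open>The representations \<open>D\<^sub>p\<^sub>,\<^sub>q\<close>\<close>

lemma kron_dims[simp]:
  "dim_row (kron A B) = dim_row A * dim_row B" "dim_col (kron A B) = dim_col A * dim_col B"
  by (simp_all add: kron_def)

lemma kron_carrier[simp]: "A \<in> carrier_mat a b \<Longrightarrow> B \<in> carrier_mat c d \<Longrightarrow> kron A B \<in> carrier_mat (a * c) (b * d)"
  by (rule carrier_matI) (simp_all add: carrier_matD)

lemma index_kron: "i < dim_row A * dim_row B \<Longrightarrow> j < dim_col A * dim_col B \<Longrightarrow>
  kron A B $$ (i,j) = A $$ (i div dim_row B, j div dim_col B) * B $$ (i mod dim_row B, j mod dim_col B)"
  by (simp add: kron_def)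

lemma kron_mat2_one:
  assumes A: "A \<in> carrier_mat 2 2"
  shows "kron A (1\<^sub>m p) = four_block_mat (A $$ (0,0) \<cdot>\<^sub>m 1\<^sub>m p) (A $$ (0,1) \<cdot>\<^sub>m 1\<^sub>m p)
    (A $$ (1,0) \<cdot>\<^sub>m 1\<^sub>m p) (A $$ (1,1) \<cdot>\<^sub>m 1\<^sub>m p)"
    (is "_ = ?B")
proof (rule eq_matI)
  fix i j assume "i < dim_row ?B" "j < dim_col ?B"
  then have i: "i < p + p" and j: "j < p + p" by auto
  have "kron A (1\<^sub>m p) $$ (i,j) = A $$ (i div p, j div p) * 1\<^sub>m p $$ (i mod p, j mod p)"
    using A i j by (subst index_kron) auto
  also have "\<dots> = ?B $$ (i,j)"
    using i j by (auto simp: div_if mod_if)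
  finally show "kron A (1\<^sub>m p) $$ (i,j) = ?B $$ (i,j)" .
qed (use A in auto)

lemma kron_mat2_lin:
  assumes "A \<in> carrier_mat 2 2" "B \<in> carrier_mat 2 2"
  shows "kron (a \<cdot>\<^sub>m A + b \<cdot>\<^sub>m B) C = a \<cdot>\<^sub>m kron A C + b \<cdot>\<^sub>m kron B C"
proof (rule eq_matI)
  fix i j assume "i < dim_row (a \<cdot>\<^sub>m kron A C + b \<cdot>\<^sub>m kron B C)"
    "j < dim_col (a \<cdot>\<^sub>m kron A C + b \<cdot>\<^sub>m kron B C)"
  then have i: "i < 2 * dim_row C" and j: "j < 2 * dim_col C"
    using assms by auto
  have "i div dim_row C < 2" "j div dim_col C < 2"
    using i j by (simp_all add: less_mult_imp_div_less)
  moreover have "i mod dim_row C < dim_row C" "j mod dim_col C < dim_col C"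
    using i j by (simp_all add: mod_less_divisor)
  ultimately show "kron (a \<cdot>\<^sub>m A + b \<cdot>\<^sub>m B) C $$ (i,j) = (a \<cdot>\<^sub>m kron A C + b \<cdot>\<^sub>m kron B C) $$ (i,j)"
    using assms i j by (simp add: index_kron algebra_simps)
qed (use assms in auto)

lemma kron_mat2_one_mult:
  assumes A: "A \<in> carrier_mat 2 2" and B: "B \<in> carrier_mat 2 2"
  shows "kron A (1\<^sub>m p) * kron B (1\<^sub>m p) = kron (A * B) (1\<^sub>m p)"
proof -
  have scalar_blocks: "(a \<cdot>\<^sub>m 1\<^sub>m p) * (b \<cdot>\<^sub>m 1\<^sub>m p) + (c \<cdot>\<^sub>m 1\<^sub>m p) * (d \<cdot>\<^sub>m 1\<^sub>m p)
      = (a * b + c * d) \<cdot>\<^sub>m (1\<^sub>m p :: complex mat)" for a b c d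
    by (simp add: smult_mult_dims mult_smult_dims) (rule eq_matI, auto simp: algebra_simps)
  have "kron A (1\<^sub>m p) * kron B (1\<^sub>m p) = four_block_mat
     ((A $$ (0,0) \<cdot>\<^sub>m 1\<^sub>m p) * (B $$ (0,0) \<cdot>\<^sub>m 1\<^sub>m p) + (A $$ (0,1) \<cdot>\<^sub>m 1\<^sub>m p) * (B $$ (1,0) \<cdot>\<^sub>m 1\<^sub>m p))
     ((A $$ (0,0) \<cdot>\<^sub>m 1\<^sub>m p) * (B $$ (0,1) \<cdot>\<^sub>m 1\<^sub>m p) + (A $$ (0,1) \<cdot>\<^sub>m 1\<^sub>m p) * (B $$ (1,1) \<cdot>\<^sub>m 1\<^sub>m p))
     ((A $$ (1,0) \<cdot>\<^sub>m 1\<^sub>m p) * (B $$ (0,0) \<cdot>\<^sub>m 1\<^sub>m p) + (A $$ (1,1) \<cdot>\<^sub>m 1\<^sub>m p) * (B $$ (1,0) \<cdot>\<^sub>m 1\<^sub>m p))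
     ((A $$ (1,0) \<cdot>\<^sub>m 1\<^sub>m p) * (B $$ (0,1) \<cdot>\<^sub>m 1\<^sub>m p) + (A $$ (1,1) \<cdot>\<^sub>m 1\<^sub>m p) * (B $$ (1,1) \<cdot>\<^sub>m 1\<^sub>m p))"
    unfolding kron_mat2_one[OF A] kron_mat2_one[OF B] by (rule mult_four_block_mat) auto
  also have "\<dots> = kron (A * B) (1\<^sub>m p)"
    unfolding scalar_blocks kron_mat2_one[OF mult_carrier_mat[OF A B]]
    using A B by (simp add: index_mult_mat2 del: index_mult_mat)
  finally show ?thesis .
qed

lemma kron_one_one: "kron (1\<^sub>m 2) (1\<^sub>m p) = (1\<^sub>m (2 * p) :: complex mat)"
proof -
  have "kron (1\<^sub>m 2) (1\<^sub>m p) = four_block_mat (1\<^sub>m p) (0\<^sub>m p p) (0\<^sub>m p p) (1\<^sub>m p :: complex mat)"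
    by (subst kron_mat2_one) (auto intro!: cong_four_block_mat eq_matI)
  then show ?thesis
    by (simp add: mult_2)
qed

lemma dsum_lin:
  assumes X1: "X1 \<in> carrier_mat n1 n1" and Y1: "Y1 \<in> carrier_mat n1 n1"
    and X2: "X2 \<in> carrier_mat n2 n2" and Y2: "Y2 \<in> carrier_mat n2 n2"
  shows "dsum (a \<cdot>\<^sub>m X1 + b \<cdot>\<^sub>m Y1) (a \<cdot>\<^sub>m X2 + b \<cdot>\<^sub>m Y2) = a \<cdot>\<^sub>m dsum X1 X2 + b \<cdot>\<^sub>m dsum Y1 Y2"
  using assms by (intro eq_matI) (auto simp: dsum_def algebra_simps)

lemma dsum_mult:
  assumes "K \<in> carrier_mat n1 n1" "K' \<in> carrier_mat n1 n1" "L \<in> carrier_mat n2 n2" "L' \<in> carrier_mat n2 n2"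
  shows "dsum K L * dsum K' L' = dsum (K * K') (L * L')"
proof -
  have "dsum K L * dsum K' L'
      = four_block_mat K (0\<^sub>m n1 n2) (0\<^sub>m n2 n1) L * four_block_mat K' (0\<^sub>m n1 n2) (0\<^sub>m n2 n1) L'"
    using assms by (simp add: dsum_def)
  also have "\<dots> = four_block_mat (K * K' + 0\<^sub>m n1 n2 * 0\<^sub>m n2 n1) (K * 0\<^sub>m n1 n2 + 0\<^sub>m n1 n2 * L')
     (0\<^sub>m n2 n1 * K' + L * 0\<^sub>m n2 n1) (0\<^sub>m n2 n1 * 0\<^sub>m n1 n2 + L * L')"
    by (rule mult_four_block_mat) (use assms in auto)
  also have "\<dots> = dsum (K * K') (L * L')"
    using assms unfolding dsum_def by (intro cong_four_block_mat) auto
  finally show ?thesis .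
qed

definition std_rep :: "nat \<Rightarrow> nat \<Rightarrow> complex mat \<Rightarrow> complex mat" where
  "std_rep p q A = dsum (kron A (1\<^sub>m p)) (kron (- A) (1\<^sub>m q))"

lemma std_rep_carrier: "A \<in> carrier_mat 2 2 \<Longrightarrow> std_rep p q A \<in> carrier_mat (2 * (p + q)) (2 * (p + q))"
  by (rule carrier_matI) (simp_all add: std_rep_def dsum_def carrier_matD)

lemma std_rep_lin:
  assumes A: "A \<in> carrier_mat 2 2" and B: "B \<in> carrier_mat 2 2"
  shows "std_rep p q (a \<cdot>\<^sub>m A + b \<cdot>\<^sub>m B) = a \<cdot>\<^sub>m std_rep p q A + b \<cdot>\<^sub>m std_rep p q B"
proof -
  have "- (a \<cdot>\<^sub>m A + b \<cdot>\<^sub>m B) = a \<cdot>\<^sub>m (- A) + b \<cdot>\<^sub>m (- B)"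
    using A B by (intro eq_matI) auto
  then show ?thesis
    unfolding std_rep_def using A B by (simp add: kron_mat2_lin dsum_lin[of _ "2 * p" _ _ "2 * q"])
qed

lemma std_rep_square:
  assumes A: "A \<in> carrier_mat 2 2" and AA: "A * A = 1\<^sub>m 2"
  shows "std_rep p q A * std_rep p q A = 1\<^sub>m (2 * (p + q))"
proof -
  have mA: "- A \<in> carrier_mat 2 2" and mAA: "(- A) * (- A) = 1\<^sub>m 2"
    using A AA by (simp_all add: carrier_matD)
  have "std_rep p q A * std_rep p q A
      = dsum (kron A (1\<^sub>m p) * kron A (1\<^sub>m p)) (kron (- A) (1\<^sub>m q) * kron (- A) (1\<^sub>m q))"
    unfolding std_rep_def using A mA by (intro dsum_mult) auto
  also have "\<dots> = 1\<^sub>m (2 * (p + q))"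
    unfolding kron_mat2_one_mult[OF A A] kron_mat2_one_mult[OF mA mA] AA mAA kron_one_one
    by (simp add: dsum_def distrib_left)
  finally show ?thesis .
qed

lemma append_cols_mult_kron_mat2_one:
  assumes X: "X \<in> carrier_mat m p" and Y: "Y \<in> carrier_mat m p" and A: "A \<in> carrier_mat 2 2"
  shows "append_cols X Y * kron A (1\<^sub>m p)
    = append_cols (A $$ (0,0) \<cdot>\<^sub>m X + A $$ (1,0) \<cdot>\<^sub>m Y) (A $$ (0,1) \<cdot>\<^sub>m X + A $$ (1,1) \<cdot>\<^sub>m Y)"
  unfolding kron_mat2_one[OF A] using X Y
  by (subst append_cols_mult_four_block_mat) (auto simp: mult_smult_dims)

lemma append_cols_mult_dsum:
  assumes X: "X \<in> carrier_mat m a" and Y: "Y \<in> carrier_mat m b"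
    and K: "K \<in> carrier_mat a a" and L: "L \<in> carrier_mat b b"
  shows "append_cols X Y * dsum K L = append_cols (X * K) (Y * L)"
  unfolding dsum_def using assms
  by (subst append_cols_mult_four_block_mat) (auto simp: carrier_matD)

lemma anticomm_if_comb_involution:
  fixes S T :: "complex mat"
  assumes S: "S \<in> carrier_mat m m" and T: "T \<in> carrier_mat m m"
    and SS: "S * S = 1\<^sub>m m" and TT: "T * T = 1\<^sub>m m"
    and ab: "a\<^sup>2 + b\<^sup>2 = 1" "a * b \<noteq> 0"
    and MM: "(of_real a \<cdot>\<^sub>m S + of_real b \<cdot>\<^sub>m T) * (of_real a \<cdot>\<^sub>m S + of_real b \<cdot>\<^sub>m T) = 1\<^sub>m m"
  shows "T * S = - (S * T)"
proof (rule eq_matI)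
  fix i j assume "i < dim_row (- (S * T))" "j < dim_col (- (S * T))"
  then have i: "i < m" and j: "j < m"
    using S T by auto
  have "(of_real a \<cdot>\<^sub>m (of_real a \<cdot>\<^sub>m (S * S) + of_real b \<cdot>\<^sub>m (T * S)) +
      of_real b \<cdot>\<^sub>m (of_real a \<cdot>\<^sub>m (S * T) + of_real b \<cdot>\<^sub>m (T * T))) $$ (i,j) = 1\<^sub>m m $$ (i,j)"
    using MM S T by (simp add: mat_ring_dims carrier_matD)
  then have "of_real (a * a + b * b) * 1\<^sub>m m $$ (i,j) + of_real (a * b) * ((S * T) $$ (i,j) + (T * S) $$ (i,j))
      = 1\<^sub>m m $$ (i,j)"
    using i j S T unfolding SS TT by (simp add: carrier_matD algebra_simps del: index_mult_mat(1))
  moreover have "a * a + b * b = 1"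
    using ab by (simp add: power2_eq_square)
  ultimately have "(S * T) $$ (i,j) + (T * S) $$ (i,j) = 0"
    using ab by simp
  then show "(T * S) $$ (i,j) = (- (S * T)) $$ (i,j)"
    using i j S T by (simp add: carrier_matD eq_neg_iff_add_eq_0 add.commute del: index_mult_mat(1))
qed (use S T in auto)

lemma herm_unitary_square: "M \<in> herm m \<inter> unitary m \<Longrightarrow> M \<in> carrier_mat m m \<and> adj M = M \<and> M * M = 1\<^sub>m m"
  by (auto simp: herm_def unitary_def)

lemma real_linear_on_herm20_pauli:
  assumes lin: "real_linear_on herm20 \<phi>"
  shows "\<phi> (pauli x y z)
    = of_real x \<cdot>\<^sub>m \<phi> (pauli 1 0 0) + of_real y \<cdot>\<^sub>m \<phi> (pauli 0 1 0) + of_real z \<cdot>\<^sub>m \<phi> (pauli 0 0 1)"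
proof -
  have lin2: "\<phi> (of_real a \<cdot>\<^sub>m pauli x y z + of_real b \<cdot>\<^sub>m pauli x' y' z')
      = of_real a \<cdot>\<^sub>m \<phi> (pauli x y z) + of_real b \<cdot>\<^sub>m \<phi> (pauli x' y' z')" for a b x y z x' y' z'
    using lin pauli_in_herm20 unfolding real_linear_on_def by blast
  have "\<phi> (pauli x y 0) = of_real x \<cdot>\<^sub>m \<phi> (pauli 1 0 0) + of_real y \<cdot>\<^sub>m \<phi> (pauli 0 1 0)"
    using lin2[of x 1 0 0 y 0 1 0] by (simp add: pauli_lin)
  moreover have "\<phi> (pauli x y z) = of_real 1 \<cdot>\<^sub>m \<phi> (pauli x y 0) + of_real z \<cdot>\<^sub>m \<phi> (pauli 0 0 1)"
    using lin2[of 1 x y 0 z 0 0 1] by (simp only: pauli_lin) simp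
  ultimately show ?thesis
    by simp
qed

lemma anticomm_if_real_linear_unitary:
  assumes lin: "real_linear_on herm20 \<phi>" and uni: "\<forall>A\<in>iherm20. \<phi> A \<in> herm m \<inter> unitary m"
    and A: "A \<in> iherm20" and B: "B \<in> iherm20"
    and AB: "of_real (3/5) \<cdot>\<^sub>m A + of_real (4/5) \<cdot>\<^sub>m B \<in> iherm20"
  shows "\<phi> B * \<phi> A = - (\<phi> A * \<phi> B)"
proof (rule anticomm_if_comb_involution)
  show "\<phi> A \<in> carrier_mat m m" "\<phi> B \<in> carrier_mat m m" "\<phi> A * \<phi> A = 1\<^sub>m m" "\<phi> B * \<phi> B = 1\<^sub>m m"
    using herm_unitary_square uni A B by blast+
  have "\<phi> (of_real (3/5) \<cdot>\<^sub>m A + of_real (4/5) \<cdot>\<^sub>m B) = of_real (3/5) \<cdot>\<^sub>m \<phi> A + of_real (4/5) \<cdot>\<^sub>m \<phi> B"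
    using lin A B unfolding real_linear_on_def iherm20_def by blast
  then show "(of_real (3/5) \<cdot>\<^sub>m \<phi> A + of_real (4/5) \<cdot>\<^sub>m \<phi> B) *
      (of_real (3/5) \<cdot>\<^sub>m \<phi> A + of_real (4/5) \<cdot>\<^sub>m \<phi> B) = 1\<^sub>m m"
    using herm_unitary_square uni AB by metis
qed (simp_all add: power2_eq_square)

section \<open>Clifford triples\<close>

locale clifford_triple =
  fixes m :: nat and S1 S2 S3 :: "complex mat"
  assumes carrier: "S1 \<in> carrier_mat m m" "S2 \<in> carrier_mat m m" "S3 \<in> carrier_mat m m"
    and self_adjoint: "adj S1 = S1" "adj S2 = S2" "adj S3 = S3"
    and square: "S1 * S1 = 1\<^sub>m m" "S2 * S2 = 1\<^sub>m m" "S3 * S3 = 1\<^sub>m m"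
    and anticomm: "S2 * S1 = - (S1 * S2)" "S3 * S1 = - (S1 * S3)" "S3 * S2 = - (S2 * S3)"

text \<open>In the model \<open>S\<^sub>i = (\<sigma>\<^sub>i \<otimes> I\<^sub>p) \<oplus> (-\<sigma>\<^sub>i \<otimes> I\<^sub>q)\<close> we have \<open>S\<^sub>3 = \<sigma>\<^sub>3 \<oplus> -\<sigma>\<^sub>3\<close> and
  \<open>-\<i> S\<^sub>1 S\<^sub>2 = \<sigma>\<^sub>3 \<oplus> \<sigma>\<^sub>3\<close> (up to the identity factors), so \<open>clifford_proj m S1 S2 S3\<close> is the
  projection onto the first \<open>p\<close> coordinates and the same expression for the \<open>-S\<^sub>i\<close> the
  projection onto coordinates \<open>2p + 1, \<dots>, 2p + q\<close>.\<close>

definition clifford_proj :: "nat \<Rightarrow> complex mat \<Rightarrow> complex mat \<Rightarrow> complex mat \<Rightarrow> complex mat" where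
  "clifford_proj m S1 S2 S3 = (1/4) \<cdot>\<^sub>m ((1\<^sub>m m + S3) * (1\<^sub>m m - \<i> \<cdot>\<^sub>m (S1 * S2)))"

lemma clifford_triple_neg:
  "clifford_triple m S1 S2 S3 \<Longrightarrow> clifford_triple m (- S1) (- S2) (- S3)"
  unfolding clifford_triple_def by (auto simp: carrier_matD)

context clifford_triple
begin

lemma S_dims[simp]:
  "dim_row S1 = m" "dim_col S1 = m" "dim_row S2 = m" "dim_col S2 = m" "dim_row S3 = m" "dim_col S3 = m"
  using carrier by auto

text \<open>Rewriting words in the \<open>S\<^sub>i\<close> to the normal form \<open>S\<^sub>1\<^sup>a S\<^sub>2\<^sup>b S\<^sub>3\<^sup>c\<close> with exponents
  \<open>0\<close> or \<open>1\<close>; comparing the resulting coefficients entrywise then proves the identities below.\<close>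

lemma S_words_normalize:
  "dim_row X = m \<Longrightarrow> S1 * (S1 * X) = X" "dim_row X = m \<Longrightarrow> S2 * (S2 * X) = X"
  "dim_row X = m \<Longrightarrow> S3 * (S3 * X) = X"
  "dim_row X = m \<Longrightarrow> S2 * (S1 * X) = - (S1 * (S2 * X))"
  "dim_row X = m \<Longrightarrow> S3 * (S1 * X) = - (S1 * (S3 * X))"
  "dim_row X = m \<Longrightarrow> S3 * (S2 * X) = - (S2 * (S3 * X))"
  by (simp_all flip: mult_assoc_dims add: square anticomm)

lemmas S_word_simps = square anticomm S_words_normalize self_adjoint mat_ring_dims smult_smult_mat

abbreviation "E \<equiv> clifford_proj m S1 S2 S3"
abbreviation "E' \<equiv> clifford_proj m (- S1) (- S2) (- S3)"

lemma E_carrier: "E \<in> carrier_mat m m"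
  by (simp add: clifford_proj_def carrier_matI)

lemma E_dims[simp]: "dim_row E = m" "dim_col E = m"
  using E_carrier by auto

lemma E_idem: "E * E = E"
  unfolding clifford_proj_def
  by (simp add: S_word_simps, rule eq_matI, simp_all add: algebra_simps del: index_mult_mat(1))

lemma E_herm: "adj E = E"
  unfolding clifford_proj_def
  by (simp add: S_word_simps adj_add adj_minus adj_mult, rule eq_matI,
      simp_all add: algebra_simps del: index_mult_mat(1))

lemma S3_E: "S3 * E = E"
  unfolding clifford_proj_def
  by (simp add: S_word_simps, rule eq_matI, simp_all add: algebra_simps del: index_mult_mat(1))

lemma S2_E: "S2 * E = \<i> \<cdot>\<^sub>m (S1 * E)"
  unfolding clifford_proj_def
  by (simp add: S_word_simps, rule eq_matI, simp_all add: algebra_simps del: index_mult_mat(1))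

lemma E_S1_E: "E * (S1 * E) = 0\<^sub>m m m"
  unfolding clifford_proj_def
  by (simp add: S_word_simps, rule eq_matI, simp_all add: algebra_simps del: index_mult_mat(1))

lemma E_E': "E * E' = 0\<^sub>m m m"
  unfolding clifford_proj_def
  by (simp add: S_word_simps, rule eq_matI, simp_all add: algebra_simps del: index_mult_mat(1))

lemma E_S1_E': "E * (S1 * E') = 0\<^sub>m m m"
  unfolding clifford_proj_def
  by (simp add: S_word_simps, rule eq_matI, simp_all add: algebra_simps del: index_mult_mat(1))

lemma E_sum: "E + S1 * (E * S1) + (E' + S1 * (E' * S1)) = 1\<^sub>m m"
  unfolding clifford_proj_def
  by (simp add: S_word_simps, rule eq_matI, simp_all add: algebra_simps del: index_mult_mat(1))

lemma orth_proj_E: "orth_proj m E"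
  using E_carrier E_herm E_idem by (simp add: orth_proj_def)

lemma isometry_append_cols_S1:
  assumes V: "V \<in> carrier_mat m p" "adj V * V = 1\<^sub>m p" "V * adj V = E"
  shows "adj (append_cols V (S1 * V)) * append_cols V (S1 * V) = 1\<^sub>m (p + p)"
    "append_cols V (S1 * V) * adj (append_cols V (S1 * V)) = E + S1 * (E * S1)"
proof -
  have S1V: "S1 * V \<in> carrier_mat m p"
    using V(1) carrier by simp
  have adj_S1V: "adj (S1 * V) = adj V * S1"
    using V(1) by (simp add: adj_mult self_adjoint)
  have "adj V * (S1 * V) = 0\<^sub>m p p"
    using isometry_adj_mult_eq_zero[OF V V carrier(1)] E_S1_E by blast
  moreover have "adj (S1 * V) * (S1 * V) = 1\<^sub>m p"
    unfolding adj_S1V using V by (simp add: S_word_simps carrier_matD)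
  ultimately show "adj (append_cols V (S1 * V)) * append_cols V (S1 * V) = 1\<^sub>m (p + p)"
    using V(1,2) S1V by (intro isometry_append_cols)
  show "append_cols V (S1 * V) * adj (append_cols V (S1 * V)) = E + S1 * (E * S1)"
    unfolding append_cols_mult_adj_append_cols[OF V(1) S1V V(1) S1V] adj_S1V
    using V by (simp add: mat_ring_dims carrier_matD flip: V(3))
qed

lemma append_cols_S1_intertwines:
  assumes V: "V \<in> carrier_mat m p" "adj V * V = 1\<^sub>m p" "V * adj V = E"
  shows "(of_real x \<cdot>\<^sub>m S1 + of_real y \<cdot>\<^sub>m S2 + of_real z \<cdot>\<^sub>m S3) * append_cols V (S1 * V)
    = append_cols V (S1 * V) * kron (pauli x y z) (1\<^sub>m p)"
proof -
  have EV: "E * V = V"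
    using isometry_range(1)[OF V] .
  have "S3 * V = S3 * E * V"
    using V(1) by (simp add: EV mult_assoc_dims carrier_matD)
  then have S3V: "S3 * V = V"
    by (simp add: S3_E EV)
  have "S2 * V = S2 * E * V"
    using V(1) by (simp add: EV mult_assoc_dims carrier_matD)
  then have S2V: "S2 * V = \<i> \<cdot>\<^sub>m (S1 * V)"
    using V(1) by (simp add: S2_E smult_mult_dims mult_assoc_dims EV carrier_matD)
  have [simp]: "dim_row V = m" "dim_col V = p"
    using V(1) by auto
  define M where "M = of_real x \<cdot>\<^sub>m S1 + of_real y \<cdot>\<^sub>m S2 + of_real z \<cdot>\<^sub>m S3"
  have M: "M \<in> carrier_mat m m"
    unfolding M_def using carrier by simp
  have S1V: "S1 * V \<in> carrier_mat m p"
    using V(1) carrier by simp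
  have "M * V = of_real z \<cdot>\<^sub>m V + (of_real x + \<i> * of_real y) \<cdot>\<^sub>m (S1 * V)"
    unfolding M_def
    by (simp add: S_word_simps S3V S2V, rule eq_matI,
        simp_all add: algebra_simps del: index_mult_mat(1))
  moreover have "M * (S1 * V) = (of_real x - \<i> * of_real y) \<cdot>\<^sub>m V + (- of_real z) \<cdot>\<^sub>m (S1 * V)"
    unfolding M_def
    by (simp add: S_word_simps S3V S2V, rule eq_matI,
        simp_all add: algebra_simps del: index_mult_mat(1))
  ultimately show ?thesis
    unfolding M_def[symmetric] mult_append_cols[OF M V(1) S1V]
      append_cols_mult_kron_mat2_one[OF V(1) S1V pauli_carrier]
    by simp
qed

lemma append_cols_neg_S1_intertwines:
  assumes V: "V \<in> carrier_mat m q" "adj V * V = 1\<^sub>m q" "V * adj V = E'"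
  shows "(of_real x \<cdot>\<^sub>m S1 + of_real y \<cdot>\<^sub>m S2 + of_real z \<cdot>\<^sub>m S3) * append_cols V (- S1 * V)
    = append_cols V (- S1 * V) * kron (- pauli x y z) (1\<^sub>m q)"
proof -
  interpret neg: clifford_triple m "- S1" "- S2" "- S3"
    by (rule clifford_triple_neg) unfold_locales
  have "of_real x \<cdot>\<^sub>m S1 + of_real y \<cdot>\<^sub>m S2 + of_real z \<cdot>\<^sub>m S3
      = of_real (- x) \<cdot>\<^sub>m - S1 + of_real (- y) \<cdot>\<^sub>m - S2 + of_real (- z) \<cdot>\<^sub>m - S3"
    using carrier by (intro eq_matI) auto
  moreover have "pauli (- x) (- y) (- z) = - pauli x y z"
    by (rule eq_mat2I) auto
  ultimately show ?thesis
    using neg.append_cols_S1_intertwines[OF V, of "- x" "- y" "- z"] by simp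
qed

lemma append_cols_S1_orthogonal:
  assumes V1: "V1 \<in> carrier_mat m p" "adj V1 * V1 = 1\<^sub>m p" "V1 * adj V1 = E"
    and V2: "V2 \<in> carrier_mat m q" "adj V2 * V2 = 1\<^sub>m q" "V2 * adj V2 = E'"
  shows "adj (append_cols V1 (S1 * V1)) * append_cols V2 (- S1 * V2) = 0\<^sub>m (p + p) (q + q)"
proof -
  interpret neg: clifford_triple m "- S1" "- S2" "- S3"
    by (rule clifford_triple_neg) unfold_locales
  have [simp]: "dim_row V1 = m" "dim_col V1 = p" "dim_row V2 = m" "dim_col V2 = q"
    using V1(1) V2(1) by auto
  have "adj V1 * (1\<^sub>m m * V2) = 0\<^sub>m p q"
    by (rule isometry_adj_mult_eq_zero[OF V1 V2]) (simp_all add: E_E')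
  then have V1_V2: "adj V1 * V2 = 0\<^sub>m p q"
    by simp
  have V1_S1_V2: "adj V1 * (S1 * V2) = 0\<^sub>m p q"
    by (rule isometry_adj_mult_eq_zero[OF V1 V2 carrier(1) E_S1_E'])
  have S1V1: "S1 * V1 \<in> carrier_mat m p" and S1V2: "- S1 * V2 \<in> carrier_mat m q"
    using V1(1) V2(1) carrier by simp_all
  show ?thesis
    unfolding adj_append_cols_mult_append_cols[OF V1(1) S1V1 V2(1) S1V2]
    by (simp add: adj_mult S_word_simps V1_V2 V1_S1_V2)
qed

lemma unitary_intertwiner:
  obtains p q U where "U \<in> unitary m" "m = 2 * (p + q)"
    "\<And>x y z. (of_real x \<cdot>\<^sub>m S1 + of_real y \<cdot>\<^sub>m S2 + of_real z \<cdot>\<^sub>m S3) * U = U * std_rep p q (pauli x y z)"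
proof -
  interpret neg: clifford_triple m "- S1" "- S2" "- S3"
    by (rule clifford_triple_neg) unfold_locales
  obtain p V1 where V1: "V1 \<in> carrier_mat m p" "adj V1 * V1 = 1\<^sub>m p" "V1 * adj V1 = E"
    using orth_proj_factor_isometry[OF orth_proj_E] by blast
  obtain q V2 where V2: "V2 \<in> carrier_mat m q" "adj V2 * V2 = 1\<^sub>m q" "V2 * adj V2 = E'"
    using orth_proj_factor_isometry[OF neg.orth_proj_E] by blast
  define W1 where "W1 = append_cols V1 (S1 * V1)"
  define W2 where "W2 = append_cols V2 (- S1 * V2)"
  define U where "U = append_cols W1 W2"
  have W1: "W1 \<in> carrier_mat m (p + p)" and W2: "W2 \<in> carrier_mat m (q + q)"
    unfolding W1_def W2_def using V1(1) V2(1) carrier by simp_all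
  have U: "U \<in> carrier_mat m (p + p + (q + q))"
    unfolding U_def using W1 W2 by simp
  have "adj W1 * W1 = 1\<^sub>m (p + p)" "adj W2 * W2 = 1\<^sub>m (q + q)" "adj W1 * W2 = 0\<^sub>m (p + p) (q + q)"
    unfolding W1_def W2_def
    by (rule isometry_append_cols_S1(1)[OF V1], rule neg.isometry_append_cols_S1(1)[OF V2],
        rule append_cols_S1_orthogonal[OF V1 V2])
  then have "adj U * U = 1\<^sub>m (p + p + (q + q))"
    unfolding U_def using W1 W2 by (intro isometry_append_cols)
  moreover have "W1 * adj W1 = E + S1 * (E * S1)" "W2 * adj W2 = E' + S1 * (E' * S1)"
    using isometry_append_cols_S1(2)[OF V1] neg.isometry_append_cols_S1(2)[OF V2]
    by (simp_all add: W1_def W2_def)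
  then have "U * adj U = 1\<^sub>m m"
    unfolding U_def append_cols_mult_adj_append_cols[OF W1 W2 W1 W2] by (simp add: E_sum)
  ultimately have "m = 2 * (p + q)" and "U \<in> unitary m"
    using unitary_dim_eq[OF U] U by (auto simp: unitary_def)
  moreover have "M * U = U * std_rep p q (pauli x y z)"
    if M: "M = of_real x \<cdot>\<^sub>m S1 + of_real y \<cdot>\<^sub>m S2 + of_real z \<cdot>\<^sub>m S3" for M x y z
  proof -
    have Mc: "M \<in> carrier_mat m m"
      unfolding M using carrier by simp
    have "M * W1 = W1 * kron (pauli x y z) (1\<^sub>m p)"
      unfolding M W1_def by (rule append_cols_S1_intertwines[OF V1])
    moreover have "M * W2 = W2 * kron (- pauli x y z) (1\<^sub>m q)"
      unfolding M W2_def by (rule append_cols_neg_S1_intertwines[OF V2])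
    moreover have "kron (pauli x y z) (1\<^sub>m p) \<in> carrier_mat (p + p) (p + p)"
      "kron (- pauli x y z) (1\<^sub>m q) \<in> carrier_mat (q + q) (q + q)"
      using kron_carrier[of _ 2 2 "1\<^sub>m _"] by (simp_all add: mult_2)
    ultimately show ?thesis
      unfolding U_def std_rep_def mult_append_cols[OF Mc W1 W2]
      using W1 W2 by (simp add: append_cols_mult_dsum)
  qed
  ultimately show ?thesis
    using that by blast
qed

end

lemma real_linear_unitary_if_conj_std_rep:
  assumes \<phi>_herm: "\<forall>A\<in>herm20. \<phi> A \<in> herm m"
    and U: "U \<in> unitary m" and m: "m = 2 * (p + q)"
    and "\<forall>A\<in>herm20. \<phi> A = U * std_rep p q A * adj U"
  shows "real_linear_on herm20 \<phi> \<and> (\<forall>A\<in>iherm20. \<phi> A \<in> herm m \<inter> unitary m)"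
proof (intro conjI)
  have rep: "\<phi> A = U * std_rep p q A * adj U" if "A \<in> herm20" for A
    using assms(4) that by blast
  have Uc: "U \<in> carrier_mat m m" and UU: "adj U * U = 1\<^sub>m m" and UU': "U * adj U = 1\<^sub>m m"
    using U by (auto simp: unitary_def)
  have A2: "A \<in> carrier_mat 2 2" if "A \<in> herm20" for A
    using that by (simp add: herm20_def herm_def)
  have D: "std_rep p q A \<in> carrier_mat m m" if "A \<in> herm20" for A
    using std_rep_carrier[OF A2[OF that]] m by simp
  show "real_linear_on herm20 \<phi>"
    unfolding real_linear_on_def
  proof (intro ballI allI)
    fix A B a b assume A: "A \<in> herm20" and B: "B \<in> herm20"
    have "\<phi> (of_real a \<cdot>\<^sub>m A + of_real b \<cdot>\<^sub>m B)
        = U * (of_real a \<cdot>\<^sub>m std_rep p q A + of_real b \<cdot>\<^sub>m std_rep p q B) * adj U"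
      by (simp add: rep herm20_lin_closed A B std_rep_lin A2)
    also have "\<dots> = of_real a \<cdot>\<^sub>m (U * std_rep p q A * adj U) + of_real b \<cdot>\<^sub>m (U * std_rep p q B * adj U)"
      using Uc D[OF A] D[OF B] by (simp add: mat_ring_dims)
    finally show "\<phi> (of_real a \<cdot>\<^sub>m A + of_real b \<cdot>\<^sub>m B) = of_real a \<cdot>\<^sub>m \<phi> A + of_real b \<cdot>\<^sub>m \<phi> B"
      by (simp add: rep A B)
  qed
  show "\<forall>A\<in>iherm20. \<phi> A \<in> herm m \<inter> unitary m"
  proof
    fix A assume A: "A \<in> iherm20"
    then have A20: "A \<in> herm20" and "adj A = A" "adj A * A = 1\<^sub>m 2"
      by (auto simp: iherm20_def herm20_def herm_def unitary_def)
    then have DD: "std_rep p q A * std_rep p q A = 1\<^sub>m m"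
      using std_rep_square[OF A2[OF A20]] m by simp
    have "\<phi> A \<in> herm m"
      using \<phi>_herm A20 by blast
    moreover have "\<phi> A * \<phi> A = U * std_rep p q A * (adj U * U) * std_rep p q A * adj U"
      using Uc D[OF A20] by (simp add: rep[OF A20] mult_assoc_dims)
    then have "\<phi> A * \<phi> A = U * (std_rep p q A * std_rep p q A) * adj U"
      using Uc D[OF A20] by (simp add: UU mult_assoc_dims)
    ultimately show "\<phi> A \<in> herm m \<inter> unitary m"
      using DD Uc UU' by (simp add: herm_def unitary_def)
  qed
qed

lemma conj_std_rep_if_real_linear_unitary:
  assumes lin: "real_linear_on herm20 \<phi>" and uni: "\<forall>A\<in>iherm20. \<phi> A \<in> herm m \<inter> unitary m"
  shows "\<exists>p q. \<exists>U\<in>unitary m. m = 2 * (p + q) \<and> (\<forall>A\<in>herm20. \<phi> A = U * std_rep p q A * adj U)"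
proof -
  define S1 S2 S3 where "S1 = \<phi> (pauli 1 0 0)" and "S2 = \<phi> (pauli 0 1 0)" and "S3 = \<phi> (pauli 0 0 1)"
  have \<phi>_pauli: "\<phi> (pauli x y z) = of_real x \<cdot>\<^sub>m S1 + of_real y \<cdot>\<^sub>m S2 + of_real z \<cdot>\<^sub>m S3" for x y z
    unfolding S1_def S2_def S3_def by (rule real_linear_on_herm20_pauli[OF lin])
  have "S1 \<in> herm m \<inter> unitary m" "S2 \<in> herm m \<inter> unitary m" "S3 \<in> herm m \<inter> unitary m"
    unfolding S1_def S2_def S3_def using uni pauli_in_iherm20 by simp_all
  then have S: "S \<in> carrier_mat m m" "adj S = S" "S * S = 1\<^sub>m m" if "S \<in> {S1, S2, S3}" for S
    using that herm_unitary_square by auto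
  have basis: "pauli 1 0 0 \<in> iherm20" "pauli 0 1 0 \<in> iherm20" "pauli 0 0 1 \<in> iherm20"
    by (rule pauli_in_iherm20; simp)+
  have "of_real (3/5) \<cdot>\<^sub>m pauli 1 0 0 + of_real (4/5) \<cdot>\<^sub>m pauli 0 1 0 \<in> iherm20"
    "of_real (3/5) \<cdot>\<^sub>m pauli 1 0 0 + of_real (4/5) \<cdot>\<^sub>m pauli 0 0 1 \<in> iherm20"
    "of_real (3/5) \<cdot>\<^sub>m pauli 0 1 0 + of_real (4/5) \<cdot>\<^sub>m pauli 0 0 1 \<in> iherm20"
    by (simp only: pauli_lin; rule pauli_in_iherm20; simp add: power2_eq_square)+
  then have "S2 * S1 = - (S1 * S2)" "S3 * S1 = - (S1 * S3)" "S3 * S2 = - (S2 * S3)"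
    unfolding S1_def S2_def S3_def using anticomm_if_real_linear_unitary[OF lin uni] basis by blast+
  then interpret clifford_triple m S1 S2 S3
    using S by unfold_locales auto
  obtain p q U where U: "U \<in> unitary m" "m = 2 * (p + q)"
    and intertwines: "\<And>x y z. (of_real x \<cdot>\<^sub>m S1 + of_real y \<cdot>\<^sub>m S2 + of_real z \<cdot>\<^sub>m S3) * U = U * std_rep p q (pauli x y z)"
    using unitary_intertwiner by blast
  have "\<phi> A = U * std_rep p q A * adj U" if A: "A \<in> herm20" for A
  proof -
    obtain x y z where A_eq: "A = pauli x y z"
      using herm20_eq_pauli[OF A] by blast
    have Uc: "U \<in> carrier_mat m m" and UU: "U * adj U = 1\<^sub>m m"
      using U by (auto simp: unitary_def)
    have M: "\<phi> A \<in> carrier_mat m m"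
      using A_eq \<phi>_pauli carrier by simp
    have "\<phi> A = \<phi> A * (U * adj U)"
      using M UU by simp
    also have "\<dots> = \<phi> A * U * adj U"
      by (rule assoc_mult_mat[symmetric, OF M Uc adj_carrier[OF Uc]])
    also have "\<dots> = U * std_rep p q A * adj U"
      by (simp add: A_eq \<phi>_pauli intertwines)
    finally show ?thesis .
  qed
  with U show ?thesis
    by blast
qed

theorem corollary3p5:
  fixes m :: nat and \<phi> :: "complex mat \<Rightarrow> complex mat"
  assumes "m \<ge> 1"
    and "\<forall>A\<in>herm20. \<phi> A \<in> herm m"
  shows "(real_linear_on herm20 \<phi> \<and> (\<forall>A\<in>iherm20. \<phi> A \<in> herm m \<inter> unitary m))
     \<longleftrightarrow> (\<exists>p q :: nat. \<exists>U \<in> unitary m. m = 2 * (p + q) \<and>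
            (\<forall>A\<in>herm20. \<phi> A = U * dsum (kron A (1\<^sub>m p)) (kron (- A) (1\<^sub>m q)) * adj U))"
  unfolding std_rep_def[symmetric]
  using conj_std_rep_if_real_linear_unitary real_linear_unitary_if_conj_std_rep[OF assms(2)] by blast

end
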